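(* Let $K$ be a pathwise connected poset and fix $o\in K$. The assignment sending a $\mathrm{C}^*$-net bundle $(\mathcal A,\jmath)_K$ over $K$ to its holonomy dynamical system $(\mathcal A_o,\pi_1^o(K),\jmath_* )$ induces a bijection between isomorphism classes of $\mathrm{C}^*$-net bundles over $K$ and isomorphism classes of $\mathrm{C}^*$-dynamical systems with group $\pi_1^o(K)$ (isomorphisms of dynamical systems being ${}^*$-isomorphisms $\eta$ with $\eta\circ\alpha_g=\beta_g\circ\eta$ for all $g$). In particular, the category of $\mathrm{C}^*$-net bundles over $K$, with morphisms of the form $(\phi,\mathrm{id}_K)$, is equivalent to the category of $\mathrm{C}^*$-dynamical systems $(\mathrm A,\pi_1^o(K),\alpha)$, with morphisms the ${}^*$-morphisms $\eta:\mathrm A\to\mathrm B$ satisfying $\eta\circ\alpha_g=\beta_g\circ\eta$ for all $g\in\pi_1^o(K)$.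
   Context: Poset homotopy. Let $K$ be a poset. The $0$-simplices are the elements of $K$; for $n\ge1$ an $n$-simplex $x$ consists of $n+1$ $(n-1)$-simplices $\partial_0x,\dots,\partial_nx$ together with an element $|x|\in K$ (the support) with $|\partial_ix|\le|x|$ for all $i$. For $a\le\tilde a$, $(\tilde a a)$ denotes the $1$-simplex with $\partial_1=a$, $\partial_0=\tilde a$ and support $\tilde a$. A path $p=b_n*\cdots*b_1$ is a finite sequence of $1$-simplices with $\partial_0b_{i}=\partial_1b_{i+1}$; it goes from $\partial_1b_1$ to $\partial_0b_n$; a loop over $o$ is a path from $o$ to $o$. $K$ is pathwise connected if any two elements are joined by a path. An elementary deformation of a path replaces two consecutive $1$-simplices $\partial_0c*\partial_2c$ by $\partial_1c$, or conversely, for some $2$-simplex $c$; homotopy $\sim$ is the equivalence relation generated. $\pi_1^o(K)$ is the group of homotopy classes of loops over $o$ with $[p][q]=[p*q]$. Nets. A net of $\mathrm{C}^*$-algebras $(\mathcal A,\jmath)_K$ assigns to each $o\in K$ a unital $\mathrm{C}^*$-algebra $\mathcal A_o$ and to each $a\le o$ a unital injective ${}^*$-morphism $\jmath_{oa}:\mathcal A_a\to\mathcal A_o$ with $\jmath_{oa}\circ\jmath_{ae}=\jmath_{oe}$ for $e\le a\le o$. It is a $\mathrm{C}^*$-net bundle if all $\jmath_{oa}$ are ${}^*$-isomorphisms; then set $\jmath_{ao}:=\jmath_{oa}^{-1}$. A morphism $(\phi,\mathrm f):(\mathcal A,\jmath)_K\to(\mathcal B,\imath)_P$ is an order preserving map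 $\mathrm f:K\to P$ together with ${}^*$-morphisms $\phi_o:\mathcal A_o\to\mathcal B_{\mathrm f(o)}$ with $\phi_o\circ\jmath_{oa}=\imath_{\mathrm f(o)\mathrm f(a)}\circ\phi_a$ for $a\le o$; it is an isomorphism if $\mathrm f$ is an order isomorphism and all $\phi_o$ are ${}^*$-isomorphisms. Holonomy. For a $\mathrm{C}^*$-net bundle and a $1$-simplex $b$ set $\jmath_b:=\jmath_{\partial_0b\,|b|}\circ\jmath_{|b|\,\partial_1b}$, and for a path $p=b_n*\cdots*b_1$ set $\jmath_p:=\jmath_{b_n}\circ\cdots\circ\jmath_{b_1}$; $\jmath_p$ depends only on the homotopy class of $p$. The holonomy dynamical system is $(\mathcal A_o,\pi_1^o(K),\jmath_* )$ with $\jmath_{*,[p]}:=\jmath_p$. *)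

theory Defs
  imports Complex_Main "HOL-Algebra.Group"
begin

record 'a cstar =
  ccarrier :: "'a set"
  cadd :: "'a \<Rightarrow> 'a \<Rightarrow> 'a"
  cmul :: "'a \<Rightarrow> 'a \<Rightarrow> 'a"
  cscale :: "complex \<Rightarrow> 'a \<Rightarrow> 'a"
  cinvol :: "'a \<Rightarrow> 'a"
  cnorm :: "'a \<Rightarrow> real"
  czero :: 'a
  cone :: 'a

definition cdist :: "'a cstar \<Rightarrow> 'a \<Rightarrow> 'a \<Rightarrow> real" where
  "cdist A x y = cnorm A (cadd A x (cscale A (-1) y))"

definition unital_cstar_alg :: "'a cstar \<Rightarrow> bool" where
  "unital_cstar_alg A \<longleftrightarrow>
    \<comment> \<open>closure\<close>
    czero A \<in> ccarrier A \<and> cone A \<in> ccarrier A \<and>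
    (\<forall>x\<in>ccarrier A. \<forall>y\<in>ccarrier A. cadd A x y \<in> ccarrier A \<and> cmul A x y \<in> ccarrier A) \<and>
    (\<forall>c. \<forall>x\<in>ccarrier A. cscale A c x \<in> ccarrier A) \<and>
    (\<forall>x\<in>ccarrier A. cinvol A x \<in> ccarrier A) \<and>
    \<comment> \<open>complex vector space\<close>
    (\<forall>x\<in>ccarrier A. \<forall>y\<in>ccarrier A. \<forall>z\<in>ccarrier A.
        cadd A (cadd A x y) z = cadd A x (cadd A y z)) \<and>
    (\<forall>x\<in>ccarrier A. \<forall>y\<in>ccarrier A. cadd A x y = cadd A y x) \<and>
    (\<forall>x\<in>ccarrier A. cadd A x (czero A) = x) \<and>
    (\<forall>x\<in>ccarrier A. \<exists>y\<in>ccarrier A. cadd A x y = czero A) \<and>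
    (\<forall>c. \<forall>x\<in>ccarrier A. \<forall>y\<in>ccarrier A.
        cscale A c (cadd A x y) = cadd A (cscale A c x) (cscale A c y)) \<and>
    (\<forall>c d. \<forall>x\<in>ccarrier A. cscale A (c + d) x = cadd A (cscale A c x) (cscale A d x)) \<and>
    (\<forall>c d. \<forall>x\<in>ccarrier A. cscale A (c * d) x = cscale A c (cscale A d x)) \<and>
    (\<forall>x\<in>ccarrier A. cscale A 1 x = x) \<and>
    \<comment> \<open>associative unital algebra\<close>
    (\<forall>x\<in>ccarrier A. \<forall>y\<in>ccarrier A. \<forall>z\<in>ccarrier A.
        cmul A (cmul A x y) z = cmul A x (cmul A y z)) \<and>
    (\<forall>x\<in>ccarrier A. \<forall>y\<in>ccarrier A. \<forall>z\<in>ccarrier A.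
        cmul A x (cadd A y z) = cadd A (cmul A x y) (cmul A x z) \<and>
        cmul A (cadd A x y) z = cadd A (cmul A x z) (cmul A y z)) \<and>
    (\<forall>c. \<forall>x\<in>ccarrier A. \<forall>y\<in>ccarrier A.
        cmul A (cscale A c x) y = cscale A c (cmul A x y) \<and>
        cmul A x (cscale A c y) = cscale A c (cmul A x y)) \<and>
    (\<forall>x\<in>ccarrier A. cmul A (cone A) x = x \<and> cmul A x (cone A) = x) \<and>
    \<comment> \<open>involution\<close>
    (\<forall>x\<in>ccarrier A. cinvol A (cinvol A x) = x) \<and>
    (\<forall>x\<in>ccarrier A. \<forall>y\<in>ccarrier A. cinvol A (cadd A x y) = cadd A (cinvol A x) (cinvol A y)) \<and>
    (\<forall>c. \<forall>x\<in>ccarrier A. cinvol A (cscale A c x) = cscale A (cnj c) (cinvol A x)) \<and>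
    (\<forall>x\<in>ccarrier A. \<forall>y\<in>ccarrier A. cinvol A (cmul A x y) = cmul A (cinvol A y) (cinvol A x)) \<and>
    \<comment> \<open>submultiplicative norm\<close>
    (\<forall>x\<in>ccarrier A. cnorm A x \<ge> 0 \<and> (cnorm A x = 0 \<longleftrightarrow> x = czero A)) \<and>
    (\<forall>x\<in>ccarrier A. \<forall>y\<in>ccarrier A. cnorm A (cadd A x y) \<le> cnorm A x + cnorm A y) \<and>
    (\<forall>c. \<forall>x\<in>ccarrier A. cnorm A (cscale A c x) = cmod c * cnorm A x) \<and>
    (\<forall>x\<in>ccarrier A. \<forall>y\<in>ccarrier A. cnorm A (cmul A x y) \<le> cnorm A x * cnorm A y) \<and>
    \<comment> \<open>completeness\<close>
    (\<forall>s::nat \<Rightarrow> 'a. (\<forall>n. s n \<in> ccarrier A) \<longrightarrow>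
        (\<forall>e>0. \<exists>N. \<forall>m\<ge>N. \<forall>n\<ge>N. cdist A (s m) (s n) < e) \<longrightarrow>
        (\<exists>l\<in>ccarrier A. \<forall>e>0. \<exists>N. \<forall>n\<ge>N. cdist A (s n) l < e)) \<and>
    \<comment> \<open>C*-identity\<close>
    (\<forall>x\<in>ccarrier A. cnorm A (cmul A (cinvol A x) x) = (cnorm A x)\<^sup>2)"

definition star_morphism :: "('a \<Rightarrow> 'b) \<Rightarrow> 'a cstar \<Rightarrow> 'b cstar \<Rightarrow> bool" where
  "star_morphism f A B \<longleftrightarrow>
    (\<forall>x\<in>ccarrier A. f x \<in> ccarrier B) \<and>
    (\<forall>x\<in>ccarrier A. \<forall>y\<in>ccarrier A. f (cadd A x y) = cadd B (f x) (f y)) \<and>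
    (\<forall>x\<in>ccarrier A. \<forall>y\<in>ccarrier A. f (cmul A x y) = cmul B (f x) (f y)) \<and>
    (\<forall>c. \<forall>x\<in>ccarrier A. f (cscale A c x) = cscale B c (f x)) \<and>
    (\<forall>x\<in>ccarrier A. f (cinvol A x) = cinvol B (f x))"

definition unital_star_morphism :: "('a \<Rightarrow> 'b) \<Rightarrow> 'a cstar \<Rightarrow> 'b cstar \<Rightarrow> bool" where
  "unital_star_morphism f A B \<longleftrightarrow> star_morphism f A B \<and> f (cone A) = cone B"

definition star_isomorphism :: "('a \<Rightarrow> 'b) \<Rightarrow> 'a cstar \<Rightarrow> 'b cstar \<Rightarrow> bool" where
  "star_isomorphism f A B \<longleftrightarrow> star_morphism f A B \<and> bij_betw f (ccarrier A) (ccarrier B)"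

type_synonym 'k simplex1 = "'k \<times> 'k \<times> 'k"

definition d0 :: "'k simplex1 \<Rightarrow> 'k" where "d0 b = fst b"
definition d1 :: "'k simplex1 \<Rightarrow> 'k" where "d1 b = fst (snd b)"
definition supp :: "'k simplex1 \<Rightarrow> 'k" where "supp b = snd (snd b)"

definition is_simplex1 :: "('k::order) simplex1 \<Rightarrow> bool" where
  "is_simplex1 b \<longleftrightarrow> d0 b \<le> supp b \<and> d1 b \<le> supp b"

text \<open>A 2-simplex: three 1-simplices (faces 0,1,2) and a support, subject to the
  simplicial identities.\<close>
type_synonym 'k simplex2 = "'k simplex1 \<times> 'k simplex1 \<times> 'k simplex1 \<times> 'k"

definition is_simplex2 :: "('k::order) simplex2 \<Rightarrow> bool" where
  "is_simplex2 c \<longleftrightarrow> (case c of (c0, c1, c2, s) \<Rightarrow>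
     is_simplex1 c0 \<and> is_simplex1 c1 \<and> is_simplex1 c2 \<and>
     supp c0 \<le> s \<and> supp c1 \<le> s \<and> supp c2 \<le> s \<and>
     d0 c1 = d0 c0 \<and> d0 c2 = d1 c0 \<and> d1 c2 = d1 c1)"

text \<open>A path b_n * ... * b_1 is represented by the list [b_1, ..., b_n]
  (b_1 is traversed first).\<close>
definition is_path :: "('k::order) simplex1 list \<Rightarrow> 'k \<Rightarrow> 'k \<Rightarrow> bool" where
  "is_path p a a' \<longleftrightarrow> p \<noteq> [] \<and> (\<forall>b\<in>set p. is_simplex1 b) \<and>
     (\<forall>i. Suc i < length p \<longrightarrow> d0 (p ! i) = d1 (p ! Suc i)) \<and>
     d1 (hd p) = a \<and> d0 (last p) = a'"

definition pathwise_connected :: "('k::order) itself \<Rightarrow> bool" where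
  "pathwise_connected _ \<longleftrightarrow> (\<forall>a b::'k. \<exists>p. is_path p a b)"

text \<open>Elementary deformation: replace the consecutive pair d0 c * d2 c by d1 c.\<close>
definition elem_deform :: "('k::order) simplex1 list \<Rightarrow> 'k simplex1 list \<Rightarrow> bool" where
  "elem_deform p q \<longleftrightarrow> (\<exists>xs ys c0 c1 c2 s. is_simplex2 (c0, c1, c2, s) \<and>
      p = xs @ [c2, c0] @ ys \<and> q = xs @ [c1] @ ys)"

definition homotopic :: "('k::order) simplex1 list \<Rightarrow> 'k simplex1 list \<Rightarrow> bool" where
  "homotopic p q \<longleftrightarrow> (p, q) \<in> ({(x, y). elem_deform x y} \<union> {(x, y). elem_deform y x})\<^sup>*"

definition hclass :: "('k::order) simplex1 list \<Rightarrow> 'k simplex1 list set" where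
  "hclass p = {q. homotopic p q}"

text \<open>The fundamental group pi_1^o(K) as a monoid record over homotopy classes of loops;
  [p][q] = [p * q], where p * q (q first, then p) is the list q @ p.\<close>
definition pi1 :: "'k::order \<Rightarrow> 'k simplex1 list set monoid" where
  "pi1 w = \<lparr> carrier = {hclass p | p. is_path p w w},
             mult = (\<lambda>X Y. hclass ((SOME q. q \<in> Y) @ (SOME p. p \<in> X))),
             one = hclass [(w, w, w)] \<rparr>"

definition dynsys :: "'a cstar \<Rightarrow> ('g, 'm) monoid_scheme \<Rightarrow> ('g \<Rightarrow> 'a \<Rightarrow> 'a) \<Rightarrow> bool" where
  "dynsys A G \<alpha> \<longleftrightarrow> unital_cstar_alg A \<and>
     (\<forall>g\<in>carrier G. star_isomorphism (\<alpha> g) A A) \<and>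
     (\<forall>g\<in>carrier G. \<forall>h\<in>carrier G. \<forall>x\<in>ccarrier A. \<alpha> (g \<otimes>\<^bsub>G\<^esub> h) x = \<alpha> g (\<alpha> h x)) \<and>
     (\<forall>x\<in>ccarrier A. \<alpha> \<one>\<^bsub>G\<^esub> x = x)"

definition equivariant :: "('a \<Rightarrow> 'b) \<Rightarrow> 'a cstar \<Rightarrow> ('g, 'm) monoid_scheme \<Rightarrow>
    ('g \<Rightarrow> 'a \<Rightarrow> 'a) \<Rightarrow> 'b cstar \<Rightarrow> ('g \<Rightarrow> 'b \<Rightarrow> 'b) \<Rightarrow> bool" where
  "equivariant \<eta> A G \<alpha> B \<beta> \<longleftrightarrow>
     (\<forall>g\<in>carrier G. \<forall>x\<in>ccarrier A. \<eta> (\<alpha> g x) = \<beta> g (\<eta> x))"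

definition dynsys_iso :: "'a cstar \<Rightarrow> ('g, 'm) monoid_scheme \<Rightarrow> ('g \<Rightarrow> 'a \<Rightarrow> 'a) \<Rightarrow>
    'b cstar \<Rightarrow> ('g \<Rightarrow> 'b \<Rightarrow> 'b) \<Rightarrow> bool" where
  "dynsys_iso A G \<alpha> B \<beta> \<longleftrightarrow>
     (\<exists>\<eta>. star_isomorphism \<eta> A B \<and> equivariant \<eta> A G \<alpha> B \<beta>)"

section \<open>C*-net bundles over a poset (the whole type 'k)\<close>

definition net_bundle :: "('k::order \<Rightarrow> 'a cstar) \<Rightarrow> ('k \<Rightarrow> 'k \<Rightarrow> 'a \<Rightarrow> 'a) \<Rightarrow> bool" where
  "net_bundle A j \<longleftrightarrow> (\<forall>w. unital_cstar_alg (A w)) \<and>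
     (\<forall>a w. a \<le> w \<longrightarrow> unital_star_morphism (j w a) (A a) (A w) \<and>
                     bij_betw (j w a) (ccarrier (A a)) (ccarrier (A w))) \<and>
     (\<forall>e a w. e \<le> a \<longrightarrow> a \<le> w \<longrightarrow> (\<forall>x\<in>ccarrier (A e). j w a (j a e x) = j w e x))"

text \<open>Morphisms of nets over K of the form (phi, id_K).\<close>
definition net_morphism :: "('k::order \<Rightarrow> 'a cstar) \<Rightarrow> ('k \<Rightarrow> 'k \<Rightarrow> 'a \<Rightarrow> 'a) \<Rightarrow>
    ('k \<Rightarrow> 'b cstar) \<Rightarrow> ('k \<Rightarrow> 'k \<Rightarrow> 'b \<Rightarrow> 'b) \<Rightarrow> ('k \<Rightarrow> 'a \<Rightarrow> 'b) \<Rightarrow> bool" where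
  "net_morphism A j B i \<phi> \<longleftrightarrow> (\<forall>w. star_morphism (\<phi> w) (A w) (B w)) \<and>
     (\<forall>a w. a \<le> w \<longrightarrow> (\<forall>x\<in>ccarrier (A a). \<phi> w (j w a x) = i w a (\<phi> a x)))"

definition net_iso :: "('k::order \<Rightarrow> 'a cstar) \<Rightarrow> ('k \<Rightarrow> 'k \<Rightarrow> 'a \<Rightarrow> 'a) \<Rightarrow>
    ('k \<Rightarrow> 'b cstar) \<Rightarrow> ('k \<Rightarrow> 'k \<Rightarrow> 'b \<Rightarrow> 'b) \<Rightarrow> bool" where
  "net_iso A j B i \<longleftrightarrow> (\<exists>\<phi>. net_morphism A j B i \<phi> \<and>
     (\<forall>w. star_isomorphism (\<phi> w) (A w) (B w)))"

text \<open>j_b = j_{d0 b, |b|} o j_{|b|, d1 b}, with j_{a o} the inverse of j_{o a}.\<close>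
definition hol1 :: "('k::order \<Rightarrow> 'a cstar) \<Rightarrow> ('k \<Rightarrow> 'k \<Rightarrow> 'a \<Rightarrow> 'a) \<Rightarrow> 'k simplex1 \<Rightarrow> 'a \<Rightarrow> 'a" where
  "hol1 A j b = inv_into (ccarrier (A (d0 b))) (j (supp b) (d0 b)) \<circ> j (supp b) (d1 b)"

text \<open>j_p = j_{b_n} w ... o j_{b_1} for p = [b_1, ..., b_n].\<close>
definition holp :: "('k::order \<Rightarrow> 'a cstar) \<Rightarrow> ('k \<Rightarrow> 'k \<Rightarrow> 'a \<Rightarrow> 'a) \<Rightarrow> 'k simplex1 list \<Rightarrow> 'a \<Rightarrow> 'a" where
  "holp A j p = foldl (\<lambda>f b. hol1 A j b \<circ> f) id p"

definition holonomy :: "('k::order \<Rightarrow> 'a cstar) \<Rightarrow> ('k \<Rightarrow> 'k \<Rightarrow> 'a \<Rightarrow> 'a) \<Rightarrow>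
    'k simplex1 list set \<Rightarrow> 'a \<Rightarrow> 'a" where
  "holonomy A j X = holp A j (SOME p. p \<in> X)"

end

theory Submission
  imports Defs
begin

text \<open>
  Transport along 1-simplices turns a net bundle into a locally constant system of algebras:
  the transport along a path only depends on its homotopy class, so transport along loops at
  the base point is an action of the fundamental group. Fix for every point \<open>a\<close> a path
  from the base point to \<open>a\<close> (its frame). A morphism of bundles commutes with transport,
  hence is determined by its fibre at the base point, and conversely every equivariant map of
  the fibres extends to the whole poset by conjugating it with the transports along the
  frames. A dynamical system \<open>\<alpha>\<close> is realised by the constant bundle whose inclusion map for
  \<open>a \<le> u\<close> is \<open>\<alpha>\<close> applied to the loop that runs along the frame of \<open>a\<close>, steps up to \<open>u\<close> and
  returns along the frame of \<open>u\<close>.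
\<close>

section \<open>Paths and their homotopy classes\<close>

fun chain :: "('k::order) simplex1 list \<Rightarrow> 'k \<Rightarrow> 'k \<Rightarrow> bool" where
  "chain [] a a' \<longleftrightarrow> a = a'"
| "chain (b # p) a a' \<longleftrightarrow> is_simplex1 b \<and> d1 b = a \<and> chain p (d0 b) a'"

lemma chain_append: "chain (p @ q) a a'' \<longleftrightarrow> (\<exists>m. chain p a m \<and> chain q m a'')"
  by (induction p arbitrary: a) auto

lemma chain_last: "chain p a a' \<Longrightarrow> p \<noteq> [] \<Longrightarrow> is_simplex1 (last p) \<and> d0 (last p) = a'"
  by (induction p arbitrary: a) auto

lemma is_path_Cons_Cons:
  "is_path (b # c # p) a a' \<longleftrightarrow> is_simplex1 b \<and> d1 b = a \<and> d0 b = d1 c \<and> is_path (c # p) (d0 b) a'"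
proof -
  have "(\<forall>i. Suc i < length (b # c # p) \<longrightarrow> d0 ((b # c # p) ! i) = d1 ((b # c # p) ! Suc i)) \<longleftrightarrow>
        d0 b = d1 c \<and> (\<forall>i. Suc i < length (c # p) \<longrightarrow> d0 ((c # p) ! i) = d1 ((c # p) ! Suc i))"
    by (metis (no_types, lifting) Suc_less_eq length_Cons nth_Cons_0 nth_Cons_Suc old.nat.exhaust
        zero_less_Suc)
  then show ?thesis unfolding is_path_def by auto
qed

lemma is_path_Cons_iff_chain: "is_path (b # p) a a' \<longleftrightarrow> chain (b # p) a a'"
proof (induction p arbitrary: b a)
  case Nil
  then show ?case by (auto simp: is_path_def)
next
  case (Cons c p)
  then show ?case by (auto simp: is_path_Cons_Cons)
qed

lemma is_path_iff_chain: "is_path p a a' \<longleftrightarrow> p \<noteq> [] \<and> chain p a a'"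
proof (cases p)
  case Nil
  then show ?thesis by (simp add: is_path_def)
qed (simp add: is_path_Cons_iff_chain)

lemma d_triple [simp]: "d0 (x, y, s) = x" "d1 (x, y, s) = y" "supp (x, y, s) = s"
  by (auto simp: d0_def d1_def supp_def)

lemma is_simplex1_triple [simp]: "is_simplex1 (x, y, s) \<longleftrightarrow> x \<le> s \<and> y \<le> s"
  by (simp add: is_simplex1_def)

lemma is_simplex2_iff: "is_simplex2 (c0, c1, c2, s) \<longleftrightarrow>
    is_simplex1 c0 \<and> is_simplex1 c1 \<and> is_simplex1 c2 \<and>
    supp c0 \<le> s \<and> supp c1 \<le> s \<and> supp c2 \<le> s \<and>
    d0 c1 = d0 c0 \<and> d0 c2 = d1 c0 \<and> d1 c2 = d1 c1"
  by (simp add: is_simplex2_def)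

definition reverse_simplex :: "'k simplex1 \<Rightarrow> 'k simplex1" where
  "reverse_simplex b = (d1 b, d0 b, supp b)"

definition reverse_path :: "'k simplex1 list \<Rightarrow> 'k simplex1 list" where
  "reverse_path p = rev (map reverse_simplex p)"

lemma reverse_simplex_simps [simp]:
  "d0 (reverse_simplex b) = d1 b" "d1 (reverse_simplex b) = d0 b"
  "supp (reverse_simplex b) = supp b" "reverse_simplex (reverse_simplex b) = b"
  by (auto simp: reverse_simplex_def d0_def d1_def supp_def)

lemma reverse_simplex_triple [simp]: "reverse_simplex (x, y, s) = (y, x, s)"
  by (simp add: reverse_simplex_def)

lemma is_simplex1_reverse_simplex [simp]: "is_simplex1 (reverse_simplex b) \<longleftrightarrow> is_simplex1 b"
  by (auto simp: is_simplex1_def)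

lemma reverse_path_simps [simp]:
  "reverse_path [] = []" "reverse_path (b # p) = reverse_path p @ [reverse_simplex b]"
  "reverse_path (p @ q) = reverse_path q @ reverse_path p" "reverse_path (reverse_path p) = p"
  by (simp_all add: reverse_path_def rev_map[symmetric] comp_def)

lemma chain_reverse_path: "chain p a a' \<Longrightarrow> chain (reverse_path p) a' a"
  by (induction p arbitrary: a) (auto simp: chain_append)

lemma homotopic_refl [simp]: "homotopic p p"
  by (simp add: homotopic_def)

lemma homotopic_trans [trans]: "homotopic p q \<Longrightarrow> homotopic q r \<Longrightarrow> homotopic p r"
  unfolding homotopic_def by (rule rtrancl_trans)

lemma homotopic_sym: "homotopic p q \<Longrightarrow> homotopic q p"
  unfolding homotopic_def
proof (induction rule: rtrancl_induct)
  case (step y z)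
  have "(z, y) \<in> {(x, y). elem_deform x y} \<union> {(x, y). elem_deform y x}" using step(2) by blast
  then show ?case using step(3) by (rule converse_rtrancl_into_rtrancl)
qed simp

lemma elem_deformI:
  "is_simplex2 (c0, c1, c2, s) \<Longrightarrow> elem_deform (xs @ [c2, c0] @ ys) (xs @ [c1] @ ys)"
  unfolding elem_deform_def by blast

lemma elem_deform_append: "elem_deform p q \<Longrightarrow> elem_deform (l @ p @ r) (l @ q @ r)"
  by (auto simp: elem_deform_def intro!: elem_deformI[of _ _ _ _ "l @ _" "_ @ r", simplified])

lemma homotopicI: "elem_deform p q \<Longrightarrow> homotopic p q"
  unfolding homotopic_def by blast

lemma homotopic_append_context: "homotopic p q \<Longrightarrow> homotopic (l @ p @ r) (l @ q @ r)"
  unfolding homotopic_def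
proof (induction rule: rtrancl_induct)
  case (step y z)
  have "(l @ y @ r, l @ z @ r) \<in> {(x, y). elem_deform x y} \<union> {(x, y). elem_deform y x}"
    using step(2) elem_deform_append[of y z l r] elem_deform_append[of z y l r] by blast
  with step(3) show ?case by (rule rtrancl_into_rtrancl)
qed simp

lemma homotopic_append: "homotopic p p' \<Longrightarrow> homotopic q q' \<Longrightarrow> homotopic (p @ q) (p' @ q')"
  using homotopic_append_context[of p p' "[]" q] homotopic_append_context[of q q' p' "[]"]
  by (auto intro: homotopic_trans)

lemma homotopic_simplex2:
  "is_simplex2 (c0, c1, c2, s) \<Longrightarrow> homotopic (l @ [c2, c0] @ r) (l @ [c1] @ r)"
  by (rule homotopicI[OF elem_deformI])

lemma homotopic_degenerate: "(x::'k::order) \<le> s \<Longrightarrow> homotopic [(x, x, s)] [(x, x, x)]"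
proof -
  assume xs: "x \<le> s"
  have "homotopic [(x, x, s)] [(x, x, x), (x, x, s)]"
    using homotopic_simplex2[of "(x, x, s)" "(x, x, s)" "(x, x, x)" s "[]" "[]"] xs
    by (auto simp: is_simplex2_iff intro: homotopic_sym)
  also have "homotopic \<dots> [(x, x, x)]"
    using homotopic_simplex2[of "(x, x, s)" "(x, x, x)" "(x, x, x)" s "[]" "[]"] xs
    by (simp add: is_simplex2_iff)
  finally show ?thesis .
qed

lemma homotopic_constant_right:
  assumes "is_simplex1 d" "d0 d = x"
  shows "homotopic (q @ [d, (x, x, x)] @ r) (q @ [d] @ r)"
  using homotopic_simplex2[of "(x, x, x)" d d "supp d" q r] assms
  by (auto simp: is_simplex2_iff is_simplex1_def)

lemma homotopic_constant_left:
  assumes "is_simplex1 d" "d1 d = x"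
  shows "homotopic (q @ [(x, x, x), d] @ r) (q @ [d] @ r)"
  using homotopic_simplex2[of d d "(x, x, x)" "supp d" q r] assms
  by (auto simp: is_simplex2_iff is_simplex1_def)

text \<open>The prefix \<open>q\<close> supplies the simplex that absorbs the constant path left over by the
  cancellation; on its own, \<open>reverse_path p @ p\<close> is only homotopic to a constant path.\<close>

lemma homotopic_cancel_simplex:
  assumes "is_simplex1 d" "is_simplex1 b" "d0 d = d0 b"
  shows "homotopic (q @ [d, reverse_simplex b, b] @ r) (q @ [d] @ r)"
proof -
  obtain x y s where b: "b = (x, y, s)" by (rule prod_cases3)
  have xs: "x \<le> s" using assms(2) b by simp
  have "homotopic (q @ [d] @ [reverse_simplex b, b] @ r) (q @ [d] @ [(x, x, s)] @ r)"
    using homotopic_simplex2[of b "(x, x, s)" "reverse_simplex b" s "q @ [d]" r] assms(2) b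
    by (simp add: is_simplex2_iff reverse_simplex_def)
  also have "homotopic \<dots> (q @ [d] @ [(x, x, x)] @ r)"
    using homotopic_append_context[OF homotopic_degenerate[OF xs], of "q @ [d]" r] by simp
  also have "homotopic \<dots> (q @ [d] @ r)"
    using homotopic_constant_right[of d x q r] assms b by simp
  finally show ?thesis by simp
qed

lemma homotopic_cancel_reverse_path:
  assumes "chain p m m'" "q \<noteq> []" "is_simplex1 (last q)" "d0 (last q) = m'"
  shows "homotopic (q @ reverse_path p @ p @ r) (q @ r)"
  using assms
proof (induction p arbitrary: q m' r rule: rev_induct)
  case (snoc b p)
  from snoc.prems(1) obtain y where p: "chain p m y" and b: "is_simplex1 b" "d1 b = y" "d0 b = m'"
    by (auto simp: chain_append)
  obtain q' d where q: "q = q' @ [d]" using snoc.prems(2) by (cases q rule: rev_cases) auto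
  have "homotopic (q @ reverse_path (p @ [b]) @ (p @ [b]) @ r)
      ((q @ [reverse_simplex b]) @ reverse_path p @ p @ ([b] @ r))"
    by simp
  also have "homotopic \<dots> ((q @ [reverse_simplex b]) @ [b] @ r)"
    by (rule snoc.IH) (use p b in auto)
  also have "homotopic \<dots> (q @ r)"
    using homotopic_cancel_simplex[of d b q' r] snoc.prems(3,4) b q by simp
  finally show ?case .
qed simp

lemma elem_deform_chain: "elem_deform p q \<Longrightarrow> chain p a a' \<longleftrightarrow> chain q a a'"
  unfolding elem_deform_def by (auto simp: chain_append is_simplex2_iff)

lemma homotopic_chain: "homotopic p q \<Longrightarrow> chain p a a' \<longleftrightarrow> chain q a a'"
  unfolding homotopic_def by (induction rule: rtrancl_induct) (auto simp: elem_deform_chain)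

lemma elem_deform_nonempty: "elem_deform p q \<Longrightarrow> p \<noteq> [] \<and> q \<noteq> []"
  unfolding elem_deform_def by auto

lemma homotopic_nonempty: "homotopic p q \<Longrightarrow> p \<noteq> [] \<Longrightarrow> q \<noteq> []"
  unfolding homotopic_def by (induction rule: rtrancl_induct) (auto dest: elem_deform_nonempty)

lemma homotopic_is_path: "homotopic p q \<Longrightarrow> is_path p a a' \<Longrightarrow> is_path q a a'"
  unfolding is_path_iff_chain using homotopic_chain homotopic_nonempty by blast

lemma hclass_eqI: "homotopic p q \<Longrightarrow> hclass p = hclass q"
  unfolding hclass_def by (blast intro: homotopic_trans homotopic_sym)

lemma homotopic_some_hclass: "homotopic p (SOME q. q \<in> hclass p)"
  using someI[of "\<lambda>q. q \<in> hclass p" p] by (simp add: hclass_def)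

lemma pi1_mult_hclass: "hclass p \<otimes>\<^bsub>pi1 w\<^esub> hclass q = hclass (q @ p)"
  unfolding pi1_def
  by (simp add: hclass_eqI[OF homotopic_sym[OF homotopic_append[OF
        homotopic_some_hclass[of q] homotopic_some_hclass[of p]]]])

lemma pi1_one_hclass: "\<one>\<^bsub>pi1 w\<^esub> = hclass [(w, w, w)]"
  by (simp add: pi1_def)

lemma hclass_in_pi1: "is_path p w w \<Longrightarrow> hclass p \<in> carrier (pi1 w)"
  by (auto simp: pi1_def)

lemma pi1_carrierE:
  assumes "X \<in> carrier (pi1 w)"
  obtains p where "is_path p w w" "X = hclass p"
  using assms by (auto simp: pi1_def)

lemma star_morphism_closed: "star_morphism f A B \<Longrightarrow> x \<in> ccarrier A \<Longrightarrow> f x \<in> ccarrier B"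
  unfolding star_morphism_def by blast

lemma star_isomorphism_closed: "star_isomorphism f A B \<Longrightarrow> x \<in> ccarrier A \<Longrightarrow> f x \<in> ccarrier B"
  unfolding star_isomorphism_def star_morphism_def by blast

lemma star_isomorphism_inj:
  "star_isomorphism f A B \<Longrightarrow> x \<in> ccarrier A \<Longrightarrow> y \<in> ccarrier A \<Longrightarrow> f x = f y \<Longrightarrow> x = y"
  unfolding star_isomorphism_def by (meson bij_betw_imp_inj_on inj_onD)

lemma star_isomorphism_imp_star_morphism: "star_isomorphism f A B \<Longrightarrow> star_morphism f A B"
  unfolding star_isomorphism_def by blast

lemma star_morphism_comp:
  "star_morphism f A B \<Longrightarrow> star_morphism g B C \<Longrightarrow> star_morphism (g \<circ> f) A C"
  unfolding star_morphism_def by auto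

lemma star_isomorphism_comp:
  "star_isomorphism f A B \<Longrightarrow> star_isomorphism g B C \<Longrightarrow> star_isomorphism (g \<circ> f) A C"
  unfolding star_isomorphism_def using star_morphism_comp bij_betw_trans by blast

lemma star_isomorphism_id: "unital_cstar_alg A \<Longrightarrow> star_isomorphism (\<lambda>x. x) A A"
  unfolding star_isomorphism_def star_morphism_def unital_cstar_alg_def by (simp add: bij_betw_def)

lemma star_isomorphism_inv_into:
  assumes A: "unital_cstar_alg A" and f: "star_isomorphism f A B"
  shows "star_isomorphism (inv_into (ccarrier A) f) B A"
proof -
  let ?g = "inv_into (ccarrier A) f"
  have bij: "bij_betw f (ccarrier A) (ccarrier B)" and sm: "star_morphism f A B"
    using f unfolding star_isomorphism_def by auto
  have bij_g: "bij_betw ?g (ccarrier B) (ccarrier A)" by (rule bij_betw_inv_into[OF bij])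
  have g_closed: "?g x \<in> ccarrier A" if "x \<in> ccarrier B" for x
    using bij_g that bij_betw_apply by fast
  have f_g: "f (?g x) = x" if "x \<in> ccarrier B" for x
    using bij that by (meson bij_betw_inv_into_right)
  have g_eqI: "?g y = z" if "z \<in> ccarrier A" "f z = y" for y z
    using bij that by (metis bij_betw_imp_inj_on inv_into_f_f)
  note ops = sm[unfolded star_morphism_def] A[unfolded unital_cstar_alg_def]
  have "star_morphism ?g B A"
    unfolding star_morphism_def
  proof (intro conjI ballI allI)
    fix x y c assume x: "x \<in> ccarrier B" and y: "y \<in> ccarrier B"
    note xy = g_closed[OF x] g_closed[OF y] f_g[OF x] f_g[OF y]
    show "?g (cadd B x y) = cadd A (?g x) (?g y)" by (rule g_eqI) (use ops xy in auto)
    show "?g (cmul B x y) = cmul A (?g x) (?g y)" by (rule g_eqI) (use ops xy in auto)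
  next
    fix x c assume x: "x \<in> ccarrier B"
    note xx = g_closed[OF x] f_g[OF x]
    show "?g x \<in> ccarrier A" by (rule g_closed[OF x])
    show "?g (cscale B c x) = cscale A c (?g x)" by (rule g_eqI) (use ops xx in auto)
    show "?g (cinvol B x) = cinvol A (?g x)" by (rule g_eqI) (use ops xx in auto)
  qed
  then show ?thesis using bij_g unfolding star_isomorphism_def by blast
qed

lemma star_isomorphism_unit:
  assumes A: "unital_cstar_alg A" and B: "unital_cstar_alg B" and f: "star_isomorphism f A B"
  shows "f (cone A) = cone B"
proof -
  have sm: "star_morphism f A B" by (rule star_isomorphism_imp_star_morphism[OF f])
  obtain u where u: "u \<in> ccarrier A" "f u = cone B"
    using f B unfolding star_isomorphism_def unital_cstar_alg_def by (metis bij_betw_iff_bijections)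
  have one_A: "cone A \<in> ccarrier A" and one_B: "cone B \<in> ccarrier B"
    using A B unfolding unital_cstar_alg_def by auto
  have "f (cone A) = cmul B (f (cone A)) (cone B)"
    using B star_morphism_closed[OF sm one_A] unfolding unital_cstar_alg_def by simp
  also have "\<dots> = f (cmul A (cone A) u)" using sm u one_A unfolding star_morphism_def by metis
  also have "\<dots> = cone B" using A u unfolding unital_cstar_alg_def by simp
  finally show ?thesis .
qed

section \<open>Transport in a net bundle\<close>

lemma net_bundle_algebra: "net_bundle A j \<Longrightarrow> unital_cstar_alg (A w)"
  unfolding net_bundle_def by blast

lemma net_bundle_star_isomorphism:
  "net_bundle A j \<Longrightarrow> a \<le> w \<Longrightarrow> star_isomorphism (j w a) (A a) (A w)"
  unfolding net_bundle_def star_isomorphism_def unital_star_morphism_def by blast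

lemma net_bundle_compose:
  "net_bundle A j \<Longrightarrow> e \<le> a \<Longrightarrow> a \<le> w \<Longrightarrow> x \<in> ccarrier (A e) \<Longrightarrow> j w a (j a e x) = j w e x"
  unfolding net_bundle_def by blast

lemma net_bundle_refl:
  assumes N: "net_bundle A j" and x: "x \<in> ccarrier (A w)"
  shows "j w w x = x"
proof -
  have j: "star_isomorphism (j w w) (A w) (A w)" using net_bundle_star_isomorphism[OF N] by simp
  have "j w w (j w w x) = j w w x" using net_bundle_compose[OF N _ _ x] by simp
  then show ?thesis using star_isomorphism_inj[OF j star_isomorphism_closed[OF j x] x] by simp
qed

lemma hol1_closed:
  assumes N: "net_bundle A j" and b: "is_simplex1 b" and x: "x \<in> ccarrier (A (d1 b))"
  shows "hol1 A j b x \<in> ccarrier (A (d0 b))"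
    and "j (supp b) (d0 b) (hol1 A j b x) = j (supp b) (d1 b) x"
proof -
  have le: "d0 b \<le> supp b" "d1 b \<le> supp b" using b unfolding is_simplex1_def by auto
  have "bij_betw (j (supp b) (d0 b)) (ccarrier (A (d0 b))) (ccarrier (A (supp b)))"
    using net_bundle_star_isomorphism[OF N le(1)] unfolding star_isomorphism_def by blast
  moreover have "j (supp b) (d1 b) x \<in> ccarrier (A (supp b))"
    by (rule star_isomorphism_closed[OF net_bundle_star_isomorphism[OF N le(2)] x])
  ultimately show "hol1 A j b x \<in> ccarrier (A (d0 b))"
    and "j (supp b) (d0 b) (hol1 A j b x) = j (supp b) (d1 b) x"
    unfolding hol1_def comp_def by (meson bij_betw_inv_into_right bij_betw_apply bij_betw_inv_into)+
qed

lemma hol1_eq_iff: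
  assumes N: "net_bundle A j" and b: "is_simplex1 b" and S: "supp b \<le> S"
    and x: "x \<in> ccarrier (A (d1 b))" and y: "y \<in> ccarrier (A (d0 b))"
  shows "hol1 A j b x = y \<longleftrightarrow> j S (d0 b) y = j S (d1 b) x"
proof -
  have le: "d0 b \<le> supp b" "d1 b \<le> supp b" using b unfolding is_simplex1_def by auto
  note hx = hol1_closed[OF N b x]
  have "j S (d0 b) (hol1 A j b x) = j S (supp b) (j (supp b) (d0 b) (hol1 A j b x))"
    using net_bundle_compose[OF N le(1) S hx(1)] by simp
  also have "\<dots> = j S (d1 b) x" using hx(2) net_bundle_compose[OF N le(2) S x] by simp
  finally have "j S (d0 b) (hol1 A j b x) = j S (d1 b) x" .
  moreover have "star_isomorphism (j S (d0 b)) (A (d0 b)) (A S)"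
    using net_bundle_star_isomorphism[OF N] le(1) S by (blast intro: order_trans)
  ultimately show ?thesis using star_isomorphism_inj[OF _ hx(1) y] by metis
qed

lemma hol1_star_isomorphism:
  assumes N: "net_bundle A j" and b: "is_simplex1 b"
  shows "star_isomorphism (hol1 A j b) (A (d1 b)) (A (d0 b))"
  unfolding hol1_def
  using b net_bundle_star_isomorphism[OF N]
  by (auto simp: is_simplex1_def intro!: star_isomorphism_comp
      star_isomorphism_inv_into[OF net_bundle_algebra[OF N]])

lemma hol1_inclusion:
  assumes N: "net_bundle A j" and le: "a \<le> w" and x: "x \<in> ccarrier (A a)"
  shows "hol1 A j (w, a, w) x = j w a x"
  using hol1_eq_iff[OF N _ order_refl, of "(w, a, w)" x "j w a x"] le x
    star_isomorphism_closed[OF net_bundle_star_isomorphism[OF N le] x] net_bundle_refl[OF N]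
  by simp

lemma hol1_simplex2:
  assumes N: "net_bundle A j" and c: "is_simplex2 (c0, c1, c2, s)" and x: "x \<in> ccarrier (A (d1 c2))"
  shows "hol1 A j c0 (hol1 A j c2 x) = hol1 A j c1 x"
proof -
  have c: "is_simplex1 c0" "is_simplex1 c1" "is_simplex1 c2" "supp c0 \<le> s" "supp c1 \<le> s"
    "supp c2 \<le> s" "d0 c1 = d0 c0" "d0 c2 = d1 c0" "d1 c2 = d1 c1"
    using c by (auto simp: is_simplex2_iff)
  have y: "hol1 A j c2 x \<in> ccarrier (A (d1 c0))" using hol1_closed(1)[OF N c(3) x] c(8) by simp
  have z: "hol1 A j c0 (hol1 A j c2 x) \<in> ccarrier (A (d0 c1))"
    using hol1_closed(1)[OF N c(1) y] c(7) by simp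
  have "j s (d0 c0) (hol1 A j c0 (hol1 A j c2 x)) = j s (d1 c0) (hol1 A j c2 x)"
    using hol1_eq_iff[OF N c(1) c(4) y hol1_closed(1)[OF N c(1) y]] by simp
  also have "\<dots> = j s (d1 c2) x"
    using hol1_eq_iff[OF N c(3) c(6) x hol1_closed(1)[OF N c(3) x]] c(8) by simp
  finally have "j s (d0 c1) (hol1 A j c0 (hol1 A j c2 x)) = j s (d1 c1) x" using c(7,9) by simp
  moreover have "x \<in> ccarrier (A (d1 c1))" using x c(9) by simp
  ultimately show ?thesis using hol1_eq_iff[OF N c(2) c(5) _ z] by metis
qed

lemma hol1_reverse_simplex:
  assumes N: "net_bundle A j" and b: "is_simplex1 b" and x: "x \<in> ccarrier (A (d1 b))"
  shows "hol1 A j (reverse_simplex b) (hol1 A j b x) = x"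
  using hol1_eq_iff[OF N _ order_refl, of "reverse_simplex b" "hol1 A j b x" x]
    hol1_closed[OF N b x] b x
  by simp

lemma holp_Nil [simp]: "holp A j [] = id"
  by (simp add: holp_def)

lemma holp_foldl:
  fixes A :: "'k::order \<Rightarrow> 'a cstar" and g :: "'a \<Rightarrow> 'a"
  shows "foldl (\<lambda>f b. hol1 A j b \<circ> f) g p = holp A j p \<circ> g"
  unfolding holp_def
proof (induction p arbitrary: g)
  case (Cons b p)
  show ?case using Cons.IH[of "hol1 A j b \<circ> g"] Cons.IH[of "hol1 A j b \<circ> id"]
    by (simp add: comp_assoc)
qed simp

lemma holp_Cons [simp]: "holp A j (b # p) = holp A j p \<circ> hol1 A j b"
  using holp_foldl[of A j "hol1 A j b \<circ> id" p] by (simp add: holp_def)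

lemma holp_append [simp]: "holp A j (p @ q) = holp A j q \<circ> holp A j p"
  using holp_foldl[of A j "holp A j p" q] by (simp add: holp_def)

lemma holp_star_isomorphism:
  "net_bundle A j \<Longrightarrow> chain p a a' \<Longrightarrow> star_isomorphism (holp A j p) (A a) (A a')"
proof (induction p arbitrary: a)
  case Nil
  then show ?case using star_isomorphism_id[OF net_bundle_algebra[OF Nil.prems(1)]] by simp
next
  case (Cons b p)
  then have b: "is_simplex1 b" "d1 b = a" "chain p (d0 b) a'" by auto
  show ?case
    using star_isomorphism_comp[OF hol1_star_isomorphism[OF Cons.prems(1) b(1)]
        Cons.IH[OF Cons.prems(1) b(3)]] b(2)
    by (simp add: comp_def)
qed

lemma holp_closed:
  "net_bundle A j \<Longrightarrow> chain p a a' \<Longrightarrow> x \<in> ccarrier (A a) \<Longrightarrow> holp A j p x \<in> ccarrier (A a')"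
  by (rule star_isomorphism_closed[OF holp_star_isomorphism])

lemma holp_reverse_path_holp:
  "net_bundle A j \<Longrightarrow> chain p a a' \<Longrightarrow> x \<in> ccarrier (A a) \<Longrightarrow>
    holp A j (reverse_path p) (holp A j p x) = x"
proof (induction p arbitrary: a x)
  case (Cons b p)
  then show ?case
    using hol1_closed(1)[of A j b x] hol1_reverse_simplex[of A j b x] by auto
qed simp

lemma holp_holp_reverse_path:
  "net_bundle A j \<Longrightarrow> chain p a a' \<Longrightarrow> y \<in> ccarrier (A a') \<Longrightarrow>
    holp A j p (holp A j (reverse_path p) y) = y"
  using holp_reverse_path_holp[OF _ chain_reverse_path, of A j p a a' y] by simp

lemma holp_elem_deform:
  assumes N: "net_bundle A j" and pq: "elem_deform p q" and p: "chain p a a'"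
    and x: "x \<in> ccarrier (A a)"
  shows "holp A j p x = holp A j q x"
proof -
  obtain xs ys c0 c1 c2 s where c: "is_simplex2 (c0, c1, c2, s)"
    and p_eq: "p = xs @ [c2, c0] @ ys" and q_eq: "q = xs @ [c1] @ ys"
    using pq unfolding elem_deform_def by blast
  obtain m where "chain xs a m" "m = d1 c2" using p p_eq by (auto simp: chain_append)
  then have "holp A j xs x \<in> ccarrier (A (d1 c2))" using holp_closed[OF N _ x] by simp
  then show ?thesis unfolding p_eq q_eq using hol1_simplex2[OF N c] by simp
qed

lemma holp_homotopic:
  assumes N: "net_bundle A j" and pq: "homotopic p q" and p: "chain p a a'"
    and x: "x \<in> ccarrier (A a)"
  shows "holp A j p x = holp A j q x"
  using pq unfolding homotopic_def
proof (induction rule: rtrancl_induct)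
  case (step y z)
  have y: "chain y a a'" using homotopic_chain[of p y] step(1) p unfolding homotopic_def by simp
  from step(2) have "holp A j y x = holp A j z x"
    using holp_elem_deform[OF N _ y x] holp_elem_deform[OF N _ _ x] elem_deform_chain[of z y] y
    by auto
  with step(3) show ?case by simp
qed simp

lemma holonomy_hclass:
  assumes N: "net_bundle A j" and p: "is_path p w w" and x: "x \<in> ccarrier (A w)"
  shows "holonomy A j (hclass p) x = holp A j p x"
proof -
  have "chain p w w" using p by (simp add: is_path_iff_chain)
  then show ?thesis
    unfolding holonomy_def by (rule holp_homotopic[OF N homotopic_some_hclass _ x, symmetric])
qed

lemma holonomy_dynsys:
  assumes N: "net_bundle A j"
  shows "dynsys (A w) (pi1 w) (holonomy A j)"
  unfolding dynsys_def
proof (intro conjI ballI)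
  show "unital_cstar_alg (A w)" by (rule net_bundle_algebra[OF N])
next
  fix X assume "X \<in> carrier (pi1 w)"
  then obtain p where p: "is_path p w w" "X = hclass p" by (rule pi1_carrierE)
  have "is_path (SOME q. q \<in> hclass p) w w"
    using homotopic_is_path[OF homotopic_some_hclass p(1)] .
  then show "star_isomorphism (holonomy A j X) (A w) (A w)"
    unfolding holonomy_def p(2) is_path_iff_chain by (blast intro: holp_star_isomorphism[OF N])
next
  fix X Y x assume "X \<in> carrier (pi1 w)" "Y \<in> carrier (pi1 w)" and x: "x \<in> ccarrier (A w)"
  then obtain p q where p: "is_path p w w" "X = hclass p" and q: "is_path q w w" "Y = hclass q"
    by (metis pi1_carrierE)
  have qp: "is_path (q @ p) w w" using p(1) q(1) by (auto simp: is_path_iff_chain chain_append)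
  have hq: "holp A j q x \<in> ccarrier (A w)"
    using holp_closed[OF N _ x] q(1) by (simp add: is_path_iff_chain)
  show "holonomy A j (X \<otimes>\<^bsub>pi1 w\<^esub> Y) x = holonomy A j X (holonomy A j Y x)"
    unfolding p(2) q(2) pi1_mult_hclass
    using holonomy_hclass[OF N qp x] holonomy_hclass[OF N p(1) hq] holonomy_hclass[OF N q(1) x]
    by simp
next
  fix x assume x: "x \<in> ccarrier (A w)"
  have "is_path [(w, w, w)] w w" by (simp add: is_path_def)
  then show "holonomy A j \<one>\<^bsub>pi1 w\<^esub> x = x"
    using holonomy_hclass[OF N _ x] hol1_inclusion[OF N order_refl x] net_bundle_refl[OF N x]
    by (simp add: pi1_one_hclass)
qed

section \<open>Morphisms of net bundles\<close>

lemma net_morphism_star_morphism: "net_morphism A j B i \<phi> \<Longrightarrow> star_morphism (\<phi> a) (A a) (B a)"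
  unfolding net_morphism_def by blast

lemma net_morphism_hol1:
  assumes NA: "net_bundle A j" and NB: "net_bundle B i" and M: "net_morphism A j B i \<phi>"
    and b: "is_simplex1 b" and x: "x \<in> ccarrier (A (d1 b))"
  shows "\<phi> (d0 b) (hol1 A j b x) = hol1 B i b (\<phi> (d1 b) x)"
proof -
  note hx = hol1_closed[OF NA b x]
  have le: "d0 b \<le> supp b" "d1 b \<le> supp b" using b unfolding is_simplex1_def by auto
  have commute: "\<phi> (supp b) (j (supp b) a x) = i (supp b) a (\<phi> a x)"
    if "a \<le> supp b" "x \<in> ccarrier (A a)" for a x
    using M that unfolding net_morphism_def by blast
  have "i (supp b) (d0 b) (\<phi> (d0 b) (hol1 A j b x)) = \<phi> (supp b) (j (supp b) (d1 b) x)"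
    using commute[OF le(1) hx(1)] hx(2) by simp
  also have "\<dots> = i (supp b) (d1 b) (\<phi> (d1 b) x)" by (rule commute[OF le(2) x])
  finally show ?thesis
    using hol1_eq_iff[OF NB b order_refl] star_morphism_closed[OF net_morphism_star_morphism[OF M]]
      x hx(1) by metis
qed

lemma net_morphism_holp:
  assumes NA: "net_bundle A j" and NB: "net_bundle B i" and M: "net_morphism A j B i \<phi>"
  shows "chain p a a' \<Longrightarrow> x \<in> ccarrier (A a) \<Longrightarrow> \<phi> a' (holp A j p x) = holp B i p (\<phi> a x)"
proof (induction p arbitrary: a x)
  case (Cons b p)
  then show ?case
    using net_morphism_hol1[OF NA NB M, of b x] hol1_closed(1)[OF NA, of b x] by auto
qed simp

lemma net_morphism_equivariant:
  assumes NA: "net_bundle A j" and NB: "net_bundle B i" and M: "net_morphism A j B i \<phi>"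
  shows "equivariant (\<phi> w) (A w) (pi1 w) (holonomy A j) (B w) (holonomy B i)"
  unfolding equivariant_def
proof (intro ballI)
  fix X x assume "X \<in> carrier (pi1 w)" and x: "x \<in> ccarrier (A w)"
  then obtain p where p: "is_path p w w" "X = hclass p" by (metis pi1_carrierE)
  have "\<phi> w x \<in> ccarrier (B w)"
    by (rule star_morphism_closed[OF net_morphism_star_morphism[OF M] x])
  then show "\<phi> w (holonomy A j X x) = holonomy B i X (\<phi> w x)"
    using holonomy_hclass[OF NA p(1) x] holonomy_hclass[OF NB p(1)] p
      net_morphism_holp[OF NA NB M _ x]
    by (simp add: is_path_iff_chain)
qed

text \<open>The base point gets the constant path as its frame, so that transport along its own
  frame is the identity.\<close>

definition frame :: "'k::order \<Rightarrow> 'k \<Rightarrow> 'k simplex1 list" where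
  "frame w a = (if a = w then [(w, w, w)] else (SOME p. is_path p w a))"

lemma frame_self [simp]: "frame w w = [(w, w, w)]"
  by (simp add: frame_def)

lemma is_path_frame:
  assumes "pathwise_connected TYPE('k::order)"
  shows "is_path (frame w a) w (a::'k)"
proof (cases "a = w")
  case False
  then show ?thesis
    using assms someI_ex[of "\<lambda>p. is_path p w a"] unfolding pathwise_connected_def frame_def by auto
qed (simp add: is_path_def)

lemma chain_frame:
  assumes "pathwise_connected TYPE('k::order)"
  shows "chain (frame w a) w (a::'k)" and "frame w a \<noteq> []"
  using is_path_frame[OF assms, of w a] by (simp_all add: is_path_iff_chain)

definition frame_loop :: "'k::order \<Rightarrow> 'k simplex1 \<Rightarrow> 'k simplex1 list" where
  "frame_loop w b = frame w (d1 b) @ [b] @ reverse_path (frame w (d0 b))"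

lemma is_path_frame_loop:
  "pathwise_connected TYPE('k::order) \<Longrightarrow> is_simplex1 b \<Longrightarrow> is_path (frame_loop w b) w (w::'k)"
  unfolding frame_loop_def
  by (auto simp: is_path_iff_chain chain_append intro!: chain_frame chain_reverse_path)

definition extend_morphism :: "'k::order \<Rightarrow> ('k \<Rightarrow> 'a cstar) \<Rightarrow> ('k \<Rightarrow> 'k \<Rightarrow> 'a \<Rightarrow> 'a) \<Rightarrow>
    ('k \<Rightarrow> 'b cstar) \<Rightarrow> ('k \<Rightarrow> 'k \<Rightarrow> 'b \<Rightarrow> 'b) \<Rightarrow> ('a \<Rightarrow> 'b) \<Rightarrow> 'k \<Rightarrow> 'a \<Rightarrow> 'b" where
  "extend_morphism w A j B i \<eta> a =
    holp B i (frame w a) \<circ> \<eta> \<circ> holp A j (reverse_path (frame w a))"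

lemma extend_morphism_base:
  assumes NA: "net_bundle A j" and NB: "net_bundle B i" and \<eta>: "star_morphism \<eta> (A w) (B w)"
    and x: "x \<in> ccarrier (A w)"
  shows "extend_morphism w A j B i \<eta> w x = \<eta> x"
  using hol1_inclusion[OF NA order_refl x] net_bundle_refl[OF NA x]
    hol1_inclusion[OF NB order_refl] net_bundle_refl[OF NB] star_morphism_closed[OF \<eta> x]
  by (simp add: extend_morphism_def)

context
  fixes w :: "'k::order"
  assumes connected: "pathwise_connected TYPE('k)"
begin

lemma extend_morphism_star_morphism:
  assumes NA: "net_bundle A j" and NB: "net_bundle B i" and \<eta>: "star_morphism \<eta> (A w) (B w)"
  shows "star_morphism (extend_morphism w A j B i \<eta> a) (A a) (B a)"
proof -
  have p: "chain (frame w a) w a" by (rule chain_frame(1)[OF connected])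
  show ?thesis
    unfolding extend_morphism_def
    by (intro star_morphism_comp[OF _ star_morphism_comp[OF \<eta>]] star_isomorphism_imp_star_morphism
        holp_star_isomorphism[OF NA chain_reverse_path[OF p]] holp_star_isomorphism[OF NB p])
qed

lemma extend_morphism_star_isomorphism:
  assumes NA: "net_bundle A j" and NB: "net_bundle B i" and \<eta>: "star_isomorphism \<eta> (A w) (B w)"
  shows "star_isomorphism (extend_morphism w A j B i \<eta> a) (A a) (B a)"
proof -
  have p: "chain (frame w a) w a" by (rule chain_frame(1)[OF connected])
  show ?thesis
    unfolding extend_morphism_def
    by (intro star_isomorphism_comp[OF _ star_isomorphism_comp[OF \<eta>]]
        holp_star_isomorphism[OF NA chain_reverse_path[OF p]] holp_star_isomorphism[OF NB p])
qed

text \<open>Transport along \<open>b\<close> differs from the transport along the loop \<open>frame_loop w b\<close> only by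
  conjugation with the frames, and equivariance moves \<open>\<eta>\<close> across the loop.\<close>

lemma extend_morphism_hol1:
  assumes NA: "net_bundle A j" and NB: "net_bundle B i" and \<eta>: "star_morphism \<eta> (A w) (B w)"
    and eq: "equivariant \<eta> (A w) (pi1 w) (holonomy A j) (B w) (holonomy B i)"
    and b: "is_simplex1 b" and x: "x \<in> ccarrier (A (d1 b))"
  shows "extend_morphism w A j B i \<eta> (d0 b) (hol1 A j b x) =
    hol1 B i b (extend_morphism w A j B i \<eta> (d1 b) x)"
proof -
  define P1 where "P1 = frame w (d1 b)"
  define P0 where "P0 = frame w (d0 b)"
  have P1: "chain P1 w (d1 b)" and P0: "chain P0 w (d0 b)"
    unfolding P1_def P0_def by (rule chain_frame(1)[OF connected])+
  define l where "l = frame_loop w b"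
  have l: "is_path l w w" unfolding l_def by (rule is_path_frame_loop[OF connected b])
  define z where "z = holp A j (reverse_path P1) x"
  have z: "z \<in> ccarrier (A w)" unfolding z_def by (rule holp_closed[OF NA chain_reverse_path[OF P1] x])
  have P1z: "holp A j P1 z = x" unfolding z_def by (rule holp_holp_reverse_path[OF NA P1 x])
  have \<eta>z: "\<eta> z \<in> ccarrier (B w)" by (rule star_morphism_closed[OF \<eta> z])
  have transported: "hol1 B i b (holp B i P1 (\<eta> z)) \<in> ccarrier (B (d0 b))"
    using hol1_closed(1)[OF NB b holp_closed[OF NB P1 \<eta>z]] .
  have "extend_morphism w A j B i \<eta> (d0 b) (hol1 A j b x) = holp B i P0 (\<eta> (holp A j l z))"
    unfolding extend_morphism_def P0_def l_def frame_loop_def using P1z P1_def by simp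
  also have "\<dots> = holp B i P0 (holp B i l (\<eta> z))"
    using eq hclass_in_pi1[OF l] z holonomy_hclass[OF NA l z] holonomy_hclass[OF NB l \<eta>z]
    unfolding equivariant_def by metis
  also have "\<dots> = holp B i P0 (holp B i (reverse_path P0) (hol1 B i b (holp B i P1 (\<eta> z))))"
    unfolding l_def frame_loop_def P0_def P1_def by simp
  also have "\<dots> = hol1 B i b (holp B i P1 (\<eta> z))"
    by (rule holp_holp_reverse_path[OF NB P0 transported])
  also have "\<dots> = hol1 B i b (extend_morphism w A j B i \<eta> (d1 b) x)"
    unfolding extend_morphism_def P1_def z_def by simp
  finally show ?thesis .
qed

lemma extend_morphism_net_morphism:
  assumes NA: "net_bundle A j" and NB: "net_bundle B i" and \<eta>: "star_morphism \<eta> (A w) (B w)"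
    and eq: "equivariant \<eta> (A w) (pi1 w) (holonomy A j) (B w) (holonomy B i)"
  shows "net_morphism A j B i (extend_morphism w A j B i \<eta>)"
  unfolding net_morphism_def
proof (intro conjI allI impI ballI)
  fix a show "star_morphism (extend_morphism w A j B i \<eta> a) (A a) (B a)"
    by (rule extend_morphism_star_morphism[OF NA NB \<eta>])
next
  fix a u x assume le: "a \<le> u" and x: "x \<in> ccarrier (A a)"
  have "extend_morphism w A j B i \<eta> a x \<in> ccarrier (B a)"
    by (rule star_morphism_closed[OF extend_morphism_star_morphism[OF NA NB \<eta>] x])
  then show "extend_morphism w A j B i \<eta> u (j u a x) = i u a (extend_morphism w A j B i \<eta> a x)"
    using extend_morphism_hol1[OF NA NB \<eta> eq, of "(u, a, u)" x] le x
      hol1_inclusion[OF NA le x] hol1_inclusion[OF NB le]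
    by simp
qed

lemma net_morphism_eq_if_eq_at_base:
  assumes NA: "net_bundle A j" and NB: "net_bundle B i"
    and \<phi>: "net_morphism A j B i \<phi>" and \<psi>: "net_morphism A j B i \<psi>"
    and eq: "\<forall>x\<in>ccarrier (A w). \<phi> w x = \<psi> w x" and x: "x \<in> ccarrier (A a)"
  shows "\<phi> a x = \<psi> a x"
proof -
  have p: "chain (frame w a) w a" by (rule chain_frame(1)[OF connected])
  define z where "z = holp A j (reverse_path (frame w a)) x"
  have z: "z \<in> ccarrier (A w)" unfolding z_def by (rule holp_closed[OF NA chain_reverse_path[OF p] x])
  have "x = holp A j (frame w a) z" unfolding z_def by (rule holp_holp_reverse_path[OF NA p x, symmetric])
  then show ?thesis
    using net_morphism_holp[OF NA NB \<phi> p z] net_morphism_holp[OF NA NB \<psi> p z] eq z by simp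
qed

end

section \<open>Realising a dynamical system as a holonomy\<close>

context
  fixes w :: "'k::order" and C :: "'c cstar" and \<alpha>
  assumes connected: "pathwise_connected TYPE('k)" and dynsys: "dynsys C (pi1 w) \<alpha>"
begin

definition realization :: "'k \<Rightarrow> 'k \<Rightarrow> 'c \<Rightarrow> 'c" where
  "realization u a = \<alpha> (hclass (frame_loop w (u, a, u)))"

lemma dynsys_algebra: "unital_cstar_alg C"
  using dynsys unfolding dynsys_def by blast

lemma dynsys_star_isomorphism: "is_path p w w \<Longrightarrow> star_isomorphism (\<alpha> (hclass p)) C C"
  using dynsys hclass_in_pi1 unfolding dynsys_def by blast

lemma dynsys_hclass_append:
  "is_path p w w \<Longrightarrow> is_path q w w \<Longrightarrow> x \<in> ccarrier C \<Longrightarrow>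
    \<alpha> (hclass p) (\<alpha> (hclass q) x) = \<alpha> (hclass (q @ p)) x"
  using dynsys hclass_in_pi1[of p w] hclass_in_pi1[of q w] pi1_mult_hclass[of w p q]
  unfolding dynsys_def by metis

lemma homotopic_frame_loop_append:
  assumes b: "is_simplex1 b" and u: "supp b \<le> u"
  shows "homotopic (frame_loop w b @ frame_loop w (u, d0 b, u)) (frame_loop w (u, d1 b, u))"
proof -
  let ?F = "frame w" and ?r = "reverse_path (frame w u)"
  have le: "d0 b \<le> u" "d1 b \<le> u" using b u unfolding is_simplex1_def by (auto intro: order_trans)
  have "homotopic ((?F (d1 b) @ [b]) @ reverse_path (?F (d0 b)) @ ?F (d0 b) @ [(u, d0 b, u)] @ ?r)
      ((?F (d1 b) @ [b]) @ [(u, d0 b, u)] @ ?r)"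
    by (rule homotopic_cancel_reverse_path[OF chain_frame(1)[OF connected]]) (use b in auto)
  also have "homotopic \<dots> (?F (d1 b) @ [(u, d1 b, u)] @ ?r)"
    using homotopic_simplex2[of "(u, d0 b, u)" "(u, d1 b, u)" b u "?F (d1 b)" ?r] b u le
    by (simp add: is_simplex2_iff)
  finally show ?thesis by (simp add: frame_loop_def)
qed

lemma realization_net_bundle: "net_bundle (\<lambda>_. C) realization"
  unfolding net_bundle_def
proof (intro conjI allI impI ballI)
  show "unital_cstar_alg C" by (rule dynsys_algebra)
next
  fix a u :: 'k assume le: "a \<le> u"
  have iso: "star_isomorphism (realization u a) C C"
    unfolding realization_def using le
    by (simp add: dynsys_star_isomorphism is_path_frame_loop[OF connected])
  then show "unital_star_morphism (realization u a) C C"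
    unfolding unital_star_morphism_def
    using star_isomorphism_imp_star_morphism star_isomorphism_unit[OF dynsys_algebra dynsys_algebra]
    by blast
  show "bij_betw (realization u a) (ccarrier C) (ccarrier C)"
    using iso unfolding star_isomorphism_def by blast
next
  fix e a u :: 'k and x assume ea: "e \<le> a" and au: "a \<le> u" and x: "x \<in> ccarrier C"
  have "homotopic (frame_loop w (a, e, a) @ frame_loop w (u, a, u)) (frame_loop w (u, e, u))"
    using homotopic_frame_loop_append[of "(a, e, a)" u] ea au by simp
  then show "realization u a (realization a e x) = realization u e x"
    unfolding realization_def using ea au x
    by (simp add: dynsys_hclass_append is_path_frame_loop[OF connected] hclass_eqI)
qed

lemma hol1_realization:
  assumes b: "is_simplex1 b" and x: "x \<in> ccarrier C"
  shows "hol1 (\<lambda>_. C) realization b x = \<alpha> (hclass (frame_loop w b)) x"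
proof -
  let ?S = "supp b"
  have loops: "is_path (frame_loop w b) w w" "is_path (frame_loop w (?S, d0 b, ?S)) w w"
    using b is_path_frame_loop[OF connected] unfolding is_simplex1_def by auto
  have "realization ?S (d0 b) (\<alpha> (hclass (frame_loop w b)) x) =
      \<alpha> (hclass (frame_loop w b @ frame_loop w (?S, d0 b, ?S))) x"
    unfolding realization_def by (rule dynsys_hclass_append[OF loops(2,1) x])
  also have "\<dots> = realization ?S (d1 b) x"
    unfolding realization_def using hclass_eqI[OF homotopic_frame_loop_append[OF b order_refl]]
    by simp
  finally show ?thesis
    using hol1_eq_iff[OF realization_net_bundle b order_refl x]
      star_isomorphism_closed[OF dynsys_star_isomorphism[OF loops(1)] x]
    by simp
qed

lemma holp_realization:
  "chain q a a' \<Longrightarrow> q \<noteq> [] \<Longrightarrow> x \<in> ccarrier C \<Longrightarrow>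
    holp (\<lambda>_. C) realization q x = \<alpha> (hclass (frame w a @ q @ reverse_path (frame w a'))) x"
proof (induction q arbitrary: a' rule: rev_induct)
  case (snoc b q)
  from snoc.prems(1) obtain y where q: "chain q a y" and b: "is_simplex1 b" "d1 b = y" "d0 b = a'"
    by (auto simp: chain_append)
  show ?case
  proof (cases "q = []")
    case True
    then show ?thesis using hol1_realization[OF b(1) snoc.prems(3)] q b by (simp add: frame_loop_def)
  next
    case False
    let ?l = "frame w a @ q @ reverse_path (frame w y)"
    have l: "is_path ?l w w"
      using q False chain_frame(1)[OF connected]
      by (auto simp: is_path_iff_chain chain_append intro!: chain_reverse_path)
    have hq: "holp (\<lambda>_. C) realization q x \<in> ccarrier C"
      using holp_closed[OF realization_net_bundle q snoc.prems(3)] .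
    have "holp (\<lambda>_. C) realization (q @ [b]) x = \<alpha> (hclass (frame_loop w b)) (\<alpha> (hclass ?l) x)"
      using hol1_realization[OF b(1) hq] snoc.IH[OF q False snoc.prems(3)] by simp
    also have "\<dots> = \<alpha> (hclass (?l @ frame_loop w b)) x"
      by (rule dynsys_hclass_append[OF is_path_frame_loop[OF connected b(1)] l snoc.prems(3)])
    also have "\<dots> = \<alpha> (hclass (frame w a @ (q @ [b]) @ reverse_path (frame w a'))) x"
      using homotopic_cancel_reverse_path[OF chain_frame(1)[OF connected, of w y],
          where q = "frame w a @ q" and r = "[b] @ reverse_path (frame w a')"] chain_last[OF q False] False b
      by (simp add: hclass_eqI frame_loop_def)
    finally show ?thesis .
  qed
qed simp

lemma holonomy_realization:
  assumes X: "X \<in> carrier (pi1 w)" and x: "x \<in> ccarrier C"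
  shows "holonomy (\<lambda>_. C) realization X x = \<alpha> X x"
proof -
  obtain p where p: "is_path p w w" "X = hclass p" using X by (rule pi1_carrierE)
  then have pw: "chain p w w" "p \<noteq> []" by (auto simp: is_path_iff_chain)
  have ends: "is_simplex1 (last p)" "d0 (last p) = w" "is_simplex1 (hd p)" "d1 (hd p) = w"
    using chain_last[OF pw] pw by (cases p; auto)+
  obtain q d where pd: "p = q @ [d]" using pw(2) by (cases p rule: rev_cases) auto
  have "homotopic ([(w, w, w)] @ p @ [(w, w, w)]) ([(w, w, w)] @ p)"
    using homotopic_constant_right[of d w "(w, w, w) # q" "[]"] ends pd by simp
  also have "homotopic \<dots> p"
    using homotopic_constant_left[of "hd p" w "[]" "tl p"] ends pw(2) by simp
  finally have "hclass ([(w, w, w)] @ p @ [(w, w, w)]) = X" using p(2) by (simp add: hclass_eqI)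
  then show ?thesis
    using holonomy_hclass[OF realization_net_bundle p(1) x] holp_realization[OF pw x] p(2) by simp
qed

lemma realization_dynsys_iso: "dynsys_iso C (pi1 w) (holonomy (\<lambda>_. C) realization) C \<alpha>"
  unfolding dynsys_iso_def equivariant_def
  using star_isomorphism_id[OF dynsys_algebra] holonomy_realization by auto

end

theorem proposition3p8:
  fixes w :: "'k::order"
  assumes "pathwise_connected TYPE('k)"
  shows
    \<comment> \<open>the holonomy of a net bundle is a C*-dynamical system with group pi_1^o(K)\<close>
    "(\<forall>(A :: 'k \<Rightarrow> 'a cstar) j. net_bundle A j \<longrightarrow> dynsys (A w) (pi1 w) (holonomy A j))
   \<comment> \<open>injectivity and well-definedness on isomorphism classes\<close>
   \<and> (\<forall>(A :: 'k \<Rightarrow> 'a cstar) j (B :: 'k \<Rightarrow> 'b cstar) i. net_bundle A j \<longrightarrow> net_bundle B i \<longrightarrow>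
        (net_iso A j B i \<longleftrightarrow> dynsys_iso (A w) (pi1 w) (holonomy A j) (B w) (holonomy B i)))
   \<comment> \<open>surjectivity on isomorphism classes\<close>
   \<and> (\<forall>(C :: 'c cstar) \<alpha>. dynsys C (pi1 w) \<alpha> \<longrightarrow>
        (\<exists>(A :: 'k \<Rightarrow> 'c cstar) j. net_bundle A j \<and> dynsys_iso (A w) (pi1 w) (holonomy A j) C \<alpha>))
   \<comment> \<open>the functor (phi, id_K) |-> phi_o is well defined, full and faithful\<close>
   \<and> (\<forall>(A :: 'k \<Rightarrow> 'a cstar) j (B :: 'k \<Rightarrow> 'b cstar) i. net_bundle A j \<longrightarrow> net_bundle B i \<longrightarrow>
        (\<forall>\<phi>. net_morphism A j B i \<phi> \<longrightarrow>
            star_morphism (\<phi> w) (A w) (B w) \<and>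
            equivariant (\<phi> w) (A w) (pi1 w) (holonomy A j) (B w) (holonomy B i)) \<and>
        (\<forall>\<eta>. star_morphism \<eta> (A w) (B w) \<and>
              equivariant \<eta> (A w) (pi1 w) (holonomy A j) (B w) (holonomy B i) \<longrightarrow>
            (\<exists>\<phi>. net_morphism A j B i \<phi> \<and> (\<forall>x\<in>ccarrier (A w). \<phi> w x = \<eta> x))) \<and>
        (\<forall>\<phi> \<psi>. net_morphism A j B i \<phi> \<longrightarrow> net_morphism A j B i \<psi> \<longrightarrow>
            (\<forall>x\<in>ccarrier (A w). \<phi> w x = \<psi> w x) \<longrightarrow>
            (\<forall>a. \<forall>x\<in>ccarrier (A a). \<phi> a x = \<psi> a x)))"
proof (intro conjI allI impI)
  fix A :: "'k \<Rightarrow> 'a cstar" and j and B :: "'k \<Rightarrow> 'b cstar" and i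
  assume NA: "net_bundle A j" and NB: "net_bundle B i"
  show "net_iso A j B i \<longleftrightarrow> dynsys_iso (A w) (pi1 w) (holonomy A j) (B w) (holonomy B i)"
    unfolding net_iso_def dynsys_iso_def
    using net_morphism_equivariant[OF NA NB]
      extend_morphism_net_morphism[OF assms NA NB star_isomorphism_imp_star_morphism]
      extend_morphism_star_isomorphism[OF assms NA NB]
    by blast
  show "\<exists>\<phi>. net_morphism A j B i \<phi> \<and> (\<forall>x\<in>ccarrier (A w). \<phi> w x = \<eta> x)"
    if "star_morphism \<eta> (A w) (B w) \<and>
      equivariant \<eta> (A w) (pi1 w) (holonomy A j) (B w) (holonomy B i)" for \<eta>
    using that extend_morphism_net_morphism[OF assms NA NB] extend_morphism_base[OF NA NB]
    by blast
qed (auto intro: holonomy_dynsys realization_net_bundle realization_dynsys_iso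
    net_morphism_star_morphism net_morphism_equivariant net_morphism_eq_if_eq_at_base assms)

end
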